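(* Let $k$ be a difference field of characteristic $0$, $R=k\{y_1,\ldots,y_n\}$, and $I$ a monomial $\sigma$-ideal of $R$ with support set $S=\{\mathbf{u}\in\mathbb{N}[x]^n:\mathbf{y}^{\mathbf{u}}\in I\}$. Then $I$ is radical and well-mixed if and only if: (a) for all $m\in\mathbb{N}\setminus\{0\}$ and $\mathbf{u}\in\mathbb{N}[x]^n$, $m\mathbf{u}\in S$ implies $\mathbf{u}\in S$; and (b) for all $\mathbf{u},\mathbf{v}\in\mathbb{N}[x]^n$, $\mathbf{u}+\mathbf{v}\in S$ implies $\mathbf{u}+x\mathbf{v}\in S$.
   Context: A difference field is a field $k$ with a ring endomorphism $\sigma$; $R=k\{y_1,\ldots,y_n\}$ is the polynomial ring over $k$ in the variables $\sigma^j(y_i)$, with $\sigma$ extended naturally. For $p=\sum_ic_ix^i\in\mathbb{N}[x]$ and $a\in R$, $a^p=\prod_i(\sigma^i(a))^{c_i}$; $\mathbf{y}^{\mathbf{u}}=y_1^{u_1}\cdots y_n^{u_n}$. A $\sigma$-ideal is an ideal stable under $\sigma$; monomial if generated by monomials; well-mixed if $ab\in I\Rightarrow a\sigma(b)\in I$; radical means radical as an ideal. *)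

theory Defs
  imports "HOL-Library.Poly_Mapping" "HOL-Computational_Algebra.Polynomial"
begin

(* Difference polynomial ring k{y_1,...,y_n}: the variables sigma^j(y_i) are indexed by
  pairs (i, j) with i :: 'n (a finite index type with n = CARD('n) elements) and j :: nat. *)

type_synonym ('n, 'k) dpoly = "(('n \<times> nat) \<Rightarrow>\<^sub>0 nat) \<Rightarrow>\<^sub>0 'k"

definition ring_endo :: "('k::field \<Rightarrow> 'k) \<Rightarrow> bool" where
  "ring_endo \<sigma> \<longleftrightarrow> \<sigma> 1 = 1 \<and> (\<forall>a b. \<sigma> (a + b) = \<sigma> a + \<sigma> b) \<and> (\<forall>a b. \<sigma> (a * b) = \<sigma> a * \<sigma> b)"

(* sigma on exponents: sigma(sigma^j y_i) = sigma^(j+1) y_i. *)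
definition shift_exp :: "(('n \<times> nat) \<Rightarrow>\<^sub>0 nat) \<Rightarrow> (('n \<times> nat) \<Rightarrow>\<^sub>0 nat)" where
  "shift_exp e = Abs_poly_mapping (\<lambda>(i, j). if j = 0 then 0 else Poly_Mapping.lookup e (i, j - 1))"

definition sigma_ext :: "('k \<Rightarrow> 'k) \<Rightarrow> ('n, 'k::comm_ring_1) dpoly \<Rightarrow> ('n, 'k) dpoly" where
  "sigma_ext \<sigma> p = (\<Sum>e\<in>Poly_Mapping.keys p. Poly_Mapping.single (shift_exp e) (\<sigma> (Poly_Mapping.lookup p e)))"

definition is_ideal :: "'a::comm_ring_1 set \<Rightarrow> bool" where
  "is_ideal I \<longleftrightarrow> 0 \<in> I \<and> (\<forall>a\<in>I. \<forall>b\<in>I. a + b \<in> I) \<and> (\<forall>r. \<forall>a\<in>I. r * a \<in> I)"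

definition ideal_gen :: "'a::comm_ring_1 set \<Rightarrow> 'a set" where
  "ideal_gen G = \<Inter>{J. is_ideal J \<and> G \<subseteq> J}"

definition is_monomial :: "('n, 'k::comm_ring_1) dpoly \<Rightarrow> bool" where
  "is_monomial p \<longleftrightarrow> (\<exists>e. p = Poly_Mapping.single e 1)"

definition sigma_ideal :: "('k \<Rightarrow> 'k) \<Rightarrow> ('n, 'k::comm_ring_1) dpoly set \<Rightarrow> bool" where
  "sigma_ideal \<sigma> I \<longleftrightarrow> is_ideal I \<and> (\<forall>a\<in>I. sigma_ext \<sigma> a \<in> I)"

definition monomial_ideal :: "('n, 'k::comm_ring_1) dpoly set \<Rightarrow> bool" where
  "monomial_ideal I \<longleftrightarrow> is_ideal I \<and> (\<exists>G. (\<forall>g\<in>G. is_monomial g) \<and> I = ideal_gen G)"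

definition well_mixed :: "('k \<Rightarrow> 'k) \<Rightarrow> ('n, 'k::comm_ring_1) dpoly set \<Rightarrow> bool" where
  "well_mixed \<sigma> I \<longleftrightarrow> (\<forall>a b. a * b \<in> I \<longrightarrow> a * sigma_ext \<sigma> b \<in> I)"

definition radical_ideal :: "'a::comm_ring_1 set \<Rightarrow> bool" where
  "radical_ideal I \<longleftrightarrow> (\<forall>a (m::nat). a ^ m \<in> I \<longrightarrow> a \<in> I)"

(* y^u for u \<in> N[x]^n: the exponent of sigma^j(y_i) is the j-th coefficient of u_i. *)
definition ymono :: "('n::finite \<Rightarrow> nat poly) \<Rightarrow> ('n, 'k::comm_ring_1) dpoly" where
  "ymono u = Poly_Mapping.single (Abs_poly_mapping (\<lambda>(i, j). coeff (u i) j)) 1"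

definition support_set :: "('n::finite, 'k::comm_ring_1) dpoly set \<Rightarrow> ('n \<Rightarrow> nat poly) set" where
  "support_set I = {u. ymono u \<in> I}"

end

theory Submission
  imports Defs "HOL-Library.Countable"
begin

text \<open>
  For a monomial ideal, membership of a polynomial amounts to membership of each of its
  monomials, so both directions reduce to statements about exponents.  Conditions (a)
  and (b) are exactly radicality and well-mixedness tested on the monomials
  \<open>(y\<^sup>u)\<^sup>m\<close> and \<open>y\<^sup>u y\<^sup>v\<close>.  Conversely, suppose (a) holds,
  \<open>a b \<in> I\<close>, and \<open>y\<^sup>e\<close> with \<open>e = s + t\<close> is not in \<open>I\<close> for monomials
  \<open>y\<^sup>s\<close> of \<open>a\<close> and \<open>y\<^sup>t\<close> of \<open>b\<close>.  By (a), no monomial in the variables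
  of \<open>y\<^sup>e\<close> lies in \<open>I\<close>, since some power of \<open>y\<^sup>e\<close> would be a multiple
  of it.  Hence setting all other variables to zero is a ring homomorphism into a polynomial
  ring (a domain) that kills \<open>I\<close> but not \<open>a\<close> or \<open>b\<close>, which is absurd.  So every
  monomial \<open>y\<^sup>s\<^sup>+\<^sup>t\<close> of \<open>a b\<close> lies in \<open>I\<close>, and (b) moves it to
  \<open>y\<^sup>s\<^sup>+\<^sup>x\<^sup>t\<close>, which covers all monomials of \<open>a \<sigma>(b)\<close>; radicality is the
  same argument applied to \<open>a\<^sup>m\<close>.
\<close>

lemma poly_mapping_sum_single:
  "p = (\<Sum>e\<in>Poly_Mapping.keys p. Poly_Mapping.single e (Poly_Mapping.lookup p e))"
  by (rule poly_mapping_eqI) (simp add: lookup_sum lookup_single when_def in_keys_iff)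

lemma keys_add_nat:
  fixes e f :: "'a \<Rightarrow>\<^sub>0 nat"
  shows "Poly_Mapping.keys (e + f) = Poly_Mapping.keys e \<union> Poly_Mapping.keys f"
  by (auto simp: in_keys_iff lookup_add)

lemma lookup_map_mult:
  fixes m :: nat
  shows "Poly_Mapping.lookup (Poly_Mapping.map ((*) m) e) x = m * Poly_Mapping.lookup e x"
  by (auto simp: map.rep_eq when_def)

lemma single_one_power:
  "Poly_Mapping.single e (1::'k::comm_semiring_1) ^ m =
     Poly_Mapping.single (Poly_Mapping.map ((*) m) e) 1"
proof (induction m)
  case 0
  have "Poly_Mapping.map (\<lambda>_. 0::nat) e = 0"
    by (rule poly_mapping_eqI) (simp add: map.rep_eq when_def)
  then show ?case by simp
next
  case (Suc m)
  have "e + Poly_Mapping.map ((*) m) e = Poly_Mapping.map ((*) (Suc m)) e"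
    by (rule poly_mapping_eqI) (simp add: lookup_map_mult lookup_add)
  with Suc show ?case by (metis mult_single power_Suc mult.right_neutral)
qed

subsection \<open>Restricting to a face and renaming variables\<close>

text \<open>
  When \<open>P\<close> is closed under sums and summands and \<open>E\<close> is additive, this is a ring
  homomorphism: it sends the monomials outside \<open>P\<close> to zero and relabels the others by \<open>E\<close>.
\<close>

definition monomial_restrict_map ::
    "('a \<Rightarrow> bool) \<Rightarrow> ('a \<Rightarrow> 'b) \<Rightarrow> ('a \<Rightarrow>\<^sub>0 'k::comm_ring_1) \<Rightarrow> ('b \<Rightarrow>\<^sub>0 'k)" where
  "monomial_restrict_map P E p =
     (\<Sum>e\<in>Poly_Mapping.keys p. if P e then Poly_Mapping.single (E e) (Poly_Mapping.lookup p e) else 0)"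

lemma monomial_restrict_map_superset:
  assumes "finite K" "Poly_Mapping.keys p \<subseteq> K"
  shows "monomial_restrict_map P E p =
           (\<Sum>e\<in>K. if P e then Poly_Mapping.single (E e) (Poly_Mapping.lookup p e) else 0)"
  unfolding monomial_restrict_map_def
  by (rule sum.mono_neutral_left[OF assms]) (auto simp: in_keys_iff)

lemma monomial_restrict_map_add:
  "monomial_restrict_map P E (p + q) = monomial_restrict_map P E p + monomial_restrict_map P E q"
proof -
  let ?K = "Poly_Mapping.keys p \<union> Poly_Mapping.keys q"
  have "monomial_restrict_map P E (p + q) =
          (\<Sum>e\<in>?K. if P e then Poly_Mapping.single (E e) (Poly_Mapping.lookup (p + q) e) else 0)"
    by (rule monomial_restrict_map_superset) (auto dest: set_mp[OF keys_add])
  also have "\<dots> = (\<Sum>e\<in>?K. (if P e then Poly_Mapping.single (E e) (Poly_Mapping.lookup p e) else 0)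
       + (if P e then Poly_Mapping.single (E e) (Poly_Mapping.lookup q e) else 0))"
    by (rule sum.cong) (auto simp: lookup_add single_add)
  also have "\<dots> = monomial_restrict_map P E p + monomial_restrict_map P E q"
    by (simp add: sum.distrib monomial_restrict_map_superset[of ?K p] monomial_restrict_map_superset[of ?K q])
  finally show ?thesis .
qed

lemma monomial_restrict_map_sum:
  "monomial_restrict_map P E (sum f A) = (\<Sum>x\<in>A. monomial_restrict_map P E (f x))"
  by (induction A rule: infinite_finite_induct)
     (simp_all add: monomial_restrict_map_add, simp_all add: monomial_restrict_map_def)

lemma monomial_restrict_map_single:
  "monomial_restrict_map P E (Poly_Mapping.single e c) =
     (if P e then Poly_Mapping.single (E e) c else 0)"
  by (subst monomial_restrict_map_superset[of "{e}"]) auto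

lemma monomial_restrict_map_mult:
  fixes E :: "'a::comm_monoid_add \<Rightarrow> 'b::comm_monoid_add"
  assumes "\<And>e f. E (e + f) = E e + E f" "\<And>e f. P (e + f) \<longleftrightarrow> P e \<and> P f"
  shows "monomial_restrict_map P E (p * q) =
           monomial_restrict_map P E p * (monomial_restrict_map P E q :: 'b \<Rightarrow>\<^sub>0 'k::comm_ring_1)"
proof -
  let ?\<Psi> = "monomial_restrict_map P E"
  have "p * q = (\<Sum>e\<in>Poly_Mapping.keys p. \<Sum>f\<in>Poly_Mapping.keys q.
       Poly_Mapping.single (e + f) (Poly_Mapping.lookup p e * Poly_Mapping.lookup q f))"
    by (subst poly_mapping_sum_single[of p], subst poly_mapping_sum_single[of q])
       (simp add: sum_product mult_single)
  then have "?\<Psi> (p * q) = (\<Sum>e\<in>Poly_Mapping.keys p. \<Sum>f\<in>Poly_Mapping.keys q.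
       ?\<Psi> (Poly_Mapping.single (e + f) (Poly_Mapping.lookup p e * Poly_Mapping.lookup q f)))"
    by (simp add: monomial_restrict_map_sum)
  also have "\<dots> = (\<Sum>e\<in>Poly_Mapping.keys p. \<Sum>f\<in>Poly_Mapping.keys q.
       ?\<Psi> (Poly_Mapping.single e (Poly_Mapping.lookup p e)) *
       ?\<Psi> (Poly_Mapping.single f (Poly_Mapping.lookup q f)))"
    by (intro sum.cong refl) (simp add: monomial_restrict_map_single assms mult_single)
  also have "\<dots> = ?\<Psi> p * ?\<Psi> q"
    by (simp add: monomial_restrict_map_single sum_product
        monomial_restrict_map_def[of P E p] monomial_restrict_map_def[of P E q])
  finally show ?thesis .
qed

lemma monomial_restrict_map_one:
  fixes E :: "'a::zero \<Rightarrow> 'b::zero"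
  assumes "E 0 = 0" "P 0"
  shows "monomial_restrict_map P E 1 = (1 :: 'b \<Rightarrow>\<^sub>0 'k::comm_ring_1)"
  using monomial_restrict_map_single[of P E 0 "1::'k"] assms by simp

lemma monomial_restrict_map_nonzero:
  assumes "inj_on E {e. P e}" "e \<in> Poly_Mapping.keys p" "P e"
  shows "monomial_restrict_map P E p \<noteq> 0"
proof -
  have "Poly_Mapping.lookup (monomial_restrict_map P E p) (E e) =
          (\<Sum>e'\<in>Poly_Mapping.keys p. if e' = e then Poly_Mapping.lookup p e else 0)"
    unfolding monomial_restrict_map_def lookup_sum
    by (rule sum.cong) (auto simp: lookup_single when_def assms(3) dest: inj_onD[OF assms(1)])
  also have "\<dots> = Poly_Mapping.lookup p e"
    using assms(2) by simp
  finally show ?thesis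
    using assms(2) by (auto simp: in_keys_iff)
qed

definition rename_keys :: "('a \<Rightarrow> 'b) \<Rightarrow> ('a \<Rightarrow>\<^sub>0 nat) \<Rightarrow> ('b \<Rightarrow>\<^sub>0 nat)" where
  "rename_keys h e =
     Abs_poly_mapping (\<lambda>k. if k \<in> range h then Poly_Mapping.lookup e (inv h k) else 0)"

lemma lookup_rename_keys:
  assumes "inj h"
  shows "Poly_Mapping.lookup (rename_keys h e) k =
           (if k \<in> range h then Poly_Mapping.lookup e (inv h k) else 0)"
proof -
  have "{k. (if k \<in> range h then Poly_Mapping.lookup e (inv h k) else 0) \<noteq> 0} \<subseteq>
          h ` Poly_Mapping.keys e"
    using assms by (auto simp: in_keys_iff)
  then have "finite {k. (if k \<in> range h then Poly_Mapping.lookup e (inv h k) else 0) \<noteq> 0}"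
    by (rule finite_subset) auto
  then show ?thesis
    by (simp add: rename_keys_def)
qed

lemma rename_keys_add: "inj h \<Longrightarrow> rename_keys h (e + f) = rename_keys h e + rename_keys h f"
  by (rule poly_mapping_eqI) (simp add: lookup_rename_keys lookup_add)

lemma rename_keys_zero: "inj h \<Longrightarrow> rename_keys h 0 = 0"
  by (rule poly_mapping_eqI) (simp add: lookup_rename_keys)

lemma inj_rename_keys:
  assumes "inj h"
  shows "inj (rename_keys h)"
proof (rule injI)
  fix e f
  assume "rename_keys h e = rename_keys h f"
  then have "Poly_Mapping.lookup (rename_keys h e) (h x) = Poly_Mapping.lookup (rename_keys h f) (h x)"
    for x by simp
  then show "e = f"
    using assms by (intro poly_mapping_eqI) (simp add: lookup_rename_keys)
qed

text \<open>
  Setting the variables outside \<open>e\<^sub>0\<close> to zero.  The variables are renamed into \<open>nat\<close>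
  only so that the target carries a monomial order, which makes it a domain.
\<close>

definition restrict_to_vars ::
    "('a::countable \<Rightarrow>\<^sub>0 nat) \<Rightarrow> (('a \<Rightarrow>\<^sub>0 nat) \<Rightarrow>\<^sub>0 'k::comm_ring_1) \<Rightarrow> ((nat \<Rightarrow>\<^sub>0 nat) \<Rightarrow>\<^sub>0 'k)" where
  "restrict_to_vars e\<^sub>0 =
     monomial_restrict_map (\<lambda>e. Poly_Mapping.keys e \<subseteq> Poly_Mapping.keys e\<^sub>0) (rename_keys to_nat)"

lemma restrict_to_vars_mult:
  "restrict_to_vars e\<^sub>0 (p * q) = restrict_to_vars e\<^sub>0 p * restrict_to_vars e\<^sub>0 q"
  unfolding restrict_to_vars_def
  by (rule monomial_restrict_map_mult) (auto simp: rename_keys_add keys_add_nat)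

lemma restrict_to_vars_power:
  fixes p :: "('a::countable \<Rightarrow>\<^sub>0 nat) \<Rightarrow>\<^sub>0 'k::comm_ring_1"
  shows "restrict_to_vars e\<^sub>0 (p ^ m) = restrict_to_vars e\<^sub>0 p ^ m"
proof -
  have "restrict_to_vars e\<^sub>0 (1 :: ('a \<Rightarrow>\<^sub>0 nat) \<Rightarrow>\<^sub>0 'k) = 1"
    unfolding restrict_to_vars_def by (rule monomial_restrict_map_one) (simp_all add: rename_keys_zero)
  then show ?thesis
    by (induction m) (simp_all add: restrict_to_vars_mult)
qed

lemma restrict_to_vars_nonzero:
  assumes "e \<in> Poly_Mapping.keys p" "Poly_Mapping.keys e \<subseteq> Poly_Mapping.keys e\<^sub>0"
  shows "restrict_to_vars e\<^sub>0 (p :: ('a::countable \<Rightarrow>\<^sub>0 nat) \<Rightarrow>\<^sub>0 'k::comm_ring_1) \<noteq> 0"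
  unfolding restrict_to_vars_def
  using assms by (intro monomial_restrict_map_nonzero inj_on_subset[OF inj_rename_keys]) simp_all

lemma ideal_sum:
  assumes "is_ideal I" "\<And>x. x \<in> A \<Longrightarrow> f x \<in> I"
  shows "sum f A \<in> I"
  using assms(2)
  by (induction A rule: infinite_finite_induct) (use assms(1) in \<open>simp_all add: is_ideal_def\<close>)

lemma ideal_single_add:
  fixes I :: "('a::comm_monoid_add \<Rightarrow>\<^sub>0 'k::comm_ring_1) set"
  assumes "is_ideal I" "Poly_Mapping.single e 1 \<in> I"
  shows "Poly_Mapping.single (d + e) c \<in> I"
proof -
  have "Poly_Mapping.single (d + e) c = Poly_Mapping.single d c * Poly_Mapping.single e 1"
    by (simp add: mult_single)
  then show ?thesis
    using assms by (simp add: is_ideal_def)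
qed

lemma ideal_mem_if_keys:
  fixes I :: "('a::comm_monoid_add \<Rightarrow>\<^sub>0 'k::comm_ring_1) set"
  assumes "is_ideal I" "\<And>e. e \<in> Poly_Mapping.keys p \<Longrightarrow> Poly_Mapping.single e 1 \<in> I"
  shows "p \<in> I"
  using ideal_single_add[OF assms(1) assms(2), of _ 0]
  by (subst poly_mapping_sum_single) (intro ideal_sum[OF assms(1)], simp)

text \<open>
  The polynomials all of whose monomials are multiples of generators form an ideal
  containing the generators, hence containing \<open>I\<close>.
\<close>

lemma monomial_ideal_single_keys:
  fixes I :: "('n, 'k::comm_ring_1) dpoly set"
  assumes "monomial_ideal I" "p \<in> I" "e \<in> Poly_Mapping.keys p"
  shows "Poly_Mapping.single e 1 \<in> I"
proof -
  from assms(1) obtain G where I: "is_ideal I" and G: "\<forall>g\<in>G. is_monomial g"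
    and IG: "I = ideal_gen G"
    by (auto simp: monomial_ideal_def)
  define J where "J = {p::('n, 'k) dpoly. \<forall>e\<in>Poly_Mapping.keys p.
                          \<exists>g d. Poly_Mapping.single g 1 \<in> G \<and> e = d + g}"
  have "is_ideal J"
    unfolding is_ideal_def
  proof (intro conjI ballI allI)
    show "0 \<in> J" by (simp add: J_def)
  next
    fix a b
    assume "a \<in> J" "b \<in> J"
    then show "a + b \<in> J"
      using keys_add[of a b] by (auto simp: J_def)
  next
    fix r a
    assume "a \<in> J"
    have "\<exists>g d. Poly_Mapping.single g 1 \<in> G \<and> e = d + g" if "e \<in> Poly_Mapping.keys (r * a)" for e
    proof -
      from that obtain x y where "y \<in> Poly_Mapping.keys a" "e = x + y"
        using keys_mult by blast
      moreover from \<open>a \<in> J\<close> this(1) obtain g d where "Poly_Mapping.single g 1 \<in> G" "y = d + g"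
        by (auto simp: J_def)
      ultimately show ?thesis
        by (metis add.assoc)
    qed
    then show "r * a \<in> J"
      by (simp add: J_def)
  qed
  moreover have "G \<subseteq> J"
    using G by (force simp: is_monomial_def J_def)
  ultimately have "p \<in> J"
    using assms(2) unfolding IG ideal_gen_def by blast
  with assms(3) obtain g d where "Poly_Mapping.single g 1 \<in> G" "e = d + g"
    unfolding J_def by blast
  moreover have "G \<subseteq> I"
    unfolding IG ideal_gen_def by blast
  ultimately show ?thesis
    using ideal_single_add[OF I] by auto
qed

text \<open>Conditions (a) and (b) of the theorem, stated on exponents.\<close>

definition root_closed :: "(('a \<Rightarrow>\<^sub>0 nat) \<Rightarrow>\<^sub>0 'k::comm_ring_1) set \<Rightarrow> bool" where
  "root_closed I \<longleftrightarrow> (\<forall>m e. m \<noteq> 0 \<longrightarrow>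
     Poly_Mapping.single (Poly_Mapping.map ((*) m) e) 1 \<in> I \<longrightarrow> Poly_Mapping.single e 1 \<in> I)"

definition shift_closed :: "('n, 'k::comm_ring_1) dpoly set \<Rightarrow> bool" where
  "shift_closed I \<longleftrightarrow> (\<forall>e f.
     Poly_Mapping.single (e + f) 1 \<in> I \<longrightarrow> Poly_Mapping.single (e + shift_exp f) 1 \<in> I)"

text \<open>
  If \<open>y\<^sup>f\<close> only involves variables of \<open>y\<^sup>e\<^sup>0\<close>, then \<open>y\<^sup>f\<close> divides
  \<open>(y\<^sup>e\<^sup>0)\<^sup>m\<close> for \<open>m\<close> larger than the total degree of \<open>y\<^sup>f\<close>.
\<close>

lemma root_closed_single_notin:
  fixes I :: "(('a \<Rightarrow>\<^sub>0 nat) \<Rightarrow>\<^sub>0 'k::comm_ring_1) set"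
  assumes I: "is_ideal I" "root_closed I"
    and e\<^sub>0: "Poly_Mapping.single e\<^sub>0 1 \<notin> I"
    and f: "Poly_Mapping.keys f \<subseteq> Poly_Mapping.keys e\<^sub>0"
  shows "Poly_Mapping.single f 1 \<notin> I"
proof
  assume fI: "Poly_Mapping.single f 1 \<in> I"
  define m where "m = Suc (\<Sum>x\<in>Poly_Mapping.keys f. Poly_Mapping.lookup f x)"
  have le: "Poly_Mapping.lookup f x \<le> m * Poly_Mapping.lookup e\<^sub>0 x" for x
  proof (cases "x \<in> Poly_Mapping.keys f")
    case True
    then have "Poly_Mapping.lookup f x \<le> m"
      unfolding m_def by (simp add: le_SucI member_le_sum)
    moreover have "Poly_Mapping.lookup e\<^sub>0 x \<noteq> 0"
      using True f by (metis in_keys_iff subsetD)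
    then have "m \<le> m * Poly_Mapping.lookup e\<^sub>0 x"
      by simp
    ultimately show ?thesis
      by (rule le_trans)
  next
    case False
    then show ?thesis by (simp add: in_keys_iff)
  qed
  define d where "d = Poly_Mapping.map ((*) m) e\<^sub>0 - f"
  have "Poly_Mapping.map ((*) m) e\<^sub>0 = d + f"
    by (rule poly_mapping_eqI) (simp add: d_def lookup_map_mult lookup_add lookup_minus le)
  with ideal_single_add[OF I(1) fI, of d 1] have "Poly_Mapping.single (Poly_Mapping.map ((*) m) e\<^sub>0) 1 \<in> I"
    by simp
  moreover have "m \<noteq> 0"
    by (simp add: m_def)
  ultimately show False
    using I(2) e\<^sub>0 unfolding root_closed_def by blast
qed

lemma restrict_to_vars_ideal:
  fixes I :: "('n::finite, 'k::comm_ring_1) dpoly set"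
  assumes "monomial_ideal I" "root_closed I" "Poly_Mapping.single e\<^sub>0 1 \<notin> I" "p \<in> I"
  shows "restrict_to_vars e\<^sub>0 p = 0"
proof -
  have "\<not> Poly_Mapping.keys e \<subseteq> Poly_Mapping.keys e\<^sub>0" if "e \<in> Poly_Mapping.keys p" for e
    using root_closed_single_notin[of I e\<^sub>0 e] monomial_ideal_single_keys[OF assms(1,4) that]
      assms(1-3) by (auto simp: monomial_ideal_def)
  then show ?thesis
    by (simp add: restrict_to_vars_def monomial_restrict_map_def)
qed

lemma root_closed_single_add_mem:
  fixes I :: "('n::finite, 'k::idom) dpoly set"
  assumes I: "monomial_ideal I" "root_closed I"
    and ab: "a * b \<in> I" and s: "s \<in> Poly_Mapping.keys a" and t: "t \<in> Poly_Mapping.keys b"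
  shows "Poly_Mapping.single (s + t) 1 \<in> I"
proof (rule ccontr)
  assume "Poly_Mapping.single (s + t) 1 \<notin> I"
  then have "restrict_to_vars (s + t) a * restrict_to_vars (s + t) b = 0"
    using restrict_to_vars_ideal[OF I _ ab] by (simp add: restrict_to_vars_mult)
  moreover have "restrict_to_vars (s + t) a \<noteq> 0" "restrict_to_vars (s + t) b \<noteq> 0"
    using restrict_to_vars_nonzero[OF s, of "s + t"] restrict_to_vars_nonzero[OF t, of "s + t"]
    by (simp_all add: keys_add_nat)
  ultimately show False
    by simp
qed

lemma root_closed_imp_radical:
  fixes I :: "('n::finite, 'k::idom) dpoly set"
  assumes I: "monomial_ideal I" "root_closed I"
  shows "radical_ideal I"
  unfolding radical_ideal_def
proof (intro allI impI)
  fix a :: "('n, 'k) dpoly" and m :: nat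
  assume am: "a ^ m \<in> I"
  have ideal: "is_ideal I"
    using I(1) by (simp add: monomial_ideal_def)
  show "a \<in> I"
  proof (rule ideal_mem_if_keys[OF ideal], rule ccontr)
    fix s
    assume "s \<in> Poly_Mapping.keys a" "Poly_Mapping.single s 1 \<notin> I"
    then have "restrict_to_vars s a ^ m = 0" "restrict_to_vars s a \<noteq> 0"
      using restrict_to_vars_ideal[OF I _ am] restrict_to_vars_nonzero
      by (auto simp: restrict_to_vars_power)
    then show False
      by simp
  qed
qed

lemma radical_imp_root_closed:
  fixes I :: "(('a \<Rightarrow>\<^sub>0 nat) \<Rightarrow>\<^sub>0 'k::comm_ring_1) set"
  assumes "radical_ideal I"
  shows "root_closed I"
  using assms unfolding radical_ideal_def root_closed_def single_one_power[symmetric] by blast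

lemma sigma_ext_single:
  "c \<noteq> 0 \<Longrightarrow> sigma_ext \<sigma> (Poly_Mapping.single e c) = Poly_Mapping.single (shift_exp e) (\<sigma> c)"
  by (simp add: sigma_ext_def)

lemma well_mixed_imp_shift_closed:
  assumes "\<sigma> 1 = 1" "well_mixed \<sigma> I"
  shows "shift_closed I"
  unfolding shift_closed_def
proof (intro allI impI)
  fix e f
  assume "Poly_Mapping.single (e + f) 1 \<in> I"
  then have "Poly_Mapping.single e 1 * Poly_Mapping.single f 1 \<in> I"
    by (simp add: mult_single)
  then have "Poly_Mapping.single e 1 * sigma_ext \<sigma> (Poly_Mapping.single f 1) \<in> I"
    using assms(2) by (simp add: well_mixed_def)
  then show "Poly_Mapping.single (e + shift_exp f) 1 \<in> I"
    by (simp add: sigma_ext_single assms(1) mult_single)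
qed

lemma shift_closed_imp_well_mixed:
  fixes I :: "('n::finite, 'k::idom) dpoly set"
  assumes I: "monomial_ideal I" "root_closed I" and shift: "shift_closed I"
  shows "well_mixed \<sigma> I"
  unfolding well_mixed_def
proof (intro allI impI)
  fix a b :: "('n, 'k) dpoly"
  assume ab: "a * b \<in> I"
  have ideal: "is_ideal I"
    using I(1) by (simp add: monomial_ideal_def)
  have "a * sigma_ext \<sigma> b =
      (\<Sum>s\<in>Poly_Mapping.keys a. Poly_Mapping.single s (Poly_Mapping.lookup a s)) *
      (\<Sum>t\<in>Poly_Mapping.keys b. Poly_Mapping.single (shift_exp t) (\<sigma> (Poly_Mapping.lookup b t)))"
    by (subst poly_mapping_sum_single) (simp add: sigma_ext_def)
  also have "\<dots> = (\<Sum>s\<in>Poly_Mapping.keys a. \<Sum>t\<in>Poly_Mapping.keys b.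
      Poly_Mapping.single (s + shift_exp t) (Poly_Mapping.lookup a s * \<sigma> (Poly_Mapping.lookup b t)))"
    by (simp add: sum_product mult_single)
  also have "\<dots> \<in> I"
  proof (intro ideal_sum[OF ideal])
    fix s t
    assume "s \<in> Poly_Mapping.keys a" "t \<in> Poly_Mapping.keys b"
    then have "Poly_Mapping.single (s + shift_exp t) 1 \<in> I"
      using shift root_closed_single_add_mem[OF I ab] by (simp add: shift_closed_def)
    then show "Poly_Mapping.single (s + shift_exp t)
        (Poly_Mapping.lookup a s * \<sigma> (Poly_Mapping.lookup b t)) \<in> I"
      using ideal_single_add[OF ideal, of _ 0] by simp
  qed
  finally show "a * sigma_ext \<sigma> b \<in> I" .
qed

definition exponent_of :: "('n::finite \<Rightarrow> nat poly) \<Rightarrow> ('n \<times> nat) \<Rightarrow>\<^sub>0 nat" where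
  "exponent_of u = Abs_poly_mapping (\<lambda>(i, j). coeff (u i) j)"

definition exponent_poly :: "(('n \<times> nat) \<Rightarrow>\<^sub>0 nat) \<Rightarrow> 'n \<Rightarrow> nat poly" where
  "exponent_poly e i = Abs_poly (\<lambda>j. Poly_Mapping.lookup e (i, j))"

lemma support_set_iff: "u \<in> support_set I \<longleftrightarrow> Poly_Mapping.single (exponent_of u) 1 \<in> I"
  by (simp add: support_set_def ymono_def exponent_of_def)

lemma lookup_exponent_of: "Poly_Mapping.lookup (exponent_of u) (i, j) = coeff (u i) j"
proof -
  have "{x. (case x of (i, j) \<Rightarrow> coeff (u i) j) \<noteq> 0} \<subseteq> (\<Union>i. {i} \<times> {..degree (u i)})"
    by (auto intro: le_degree)
  then have "finite {x. (case x of (i, j) \<Rightarrow> coeff (u i) j) \<noteq> 0}"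
    by (rule finite_subset) auto
  then show ?thesis
    by (simp add: exponent_of_def)
qed

lemma coeff_exponent_poly: "coeff (exponent_poly e i) j = Poly_Mapping.lookup e (i, j)"
proof -
  have "Poly_Mapping.lookup e (i, j) = 0" if "j > Max (snd ` Poly_Mapping.keys e)" for j
  proof (rule ccontr)
    assume "Poly_Mapping.lookup e (i, j) \<noteq> 0"
    then have "j \<in> snd ` Poly_Mapping.keys e"
      by (force simp: in_keys_iff)
    with that show False
      by (metis Max_ge finite_imageI finite_keys not_le)
  qed
  then show ?thesis
    unfolding exponent_poly_def by (subst coeff_Abs_poly) auto
qed

lemma exponent_of_exponent_poly: "exponent_of (exponent_poly e) = e"
  by (rule poly_mapping_eqI) (auto simp: lookup_exponent_of coeff_exponent_poly)

lemma exponent_of_add: "exponent_of (\<lambda>i. u i + v i) = exponent_of u + exponent_of v"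
  by (rule poly_mapping_eqI) (auto simp: lookup_exponent_of lookup_add)

lemma exponent_of_scale:
  "exponent_of (\<lambda>i. of_nat m * u i) = Poly_Mapping.map ((*) m) (exponent_of u)"
  by (rule poly_mapping_eqI) (auto simp: lookup_exponent_of lookup_map_mult of_nat_poly)

lemma lookup_shift_exp:
  "Poly_Mapping.lookup (shift_exp e) (i, j) = (if j = 0 then 0 else Poly_Mapping.lookup e (i, j - 1))"
proof -
  have "{x. (case x of (i, j) \<Rightarrow> if j = 0 then 0 else Poly_Mapping.lookup e (i, j - 1)) \<noteq> 0}
          \<subseteq> (\<lambda>(i, j). (i, Suc j)) ` Poly_Mapping.keys e"
    by (force simp: in_keys_iff split: if_splits intro: image_eqI[where x = "(_, _ - 1)"])
  then have "finite {x. (case x of (i, j) \<Rightarrow> if j = 0 then 0 else Poly_Mapping.lookup e (i, j - 1)) \<noteq> 0}"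
    by (rule finite_subset) auto
  then show ?thesis
    by (simp add: shift_exp_def)
qed

lemma exponent_of_shift:
  "exponent_of (\<lambda>i. u i + monom 1 1 * v i) = exponent_of u + shift_exp (exponent_of v)"
  by (rule poly_mapping_eqI)
     (auto simp: lookup_exponent_of lookup_add lookup_shift_exp coeff_monom_mult)

lemma support_set_root_closed_iff:
  "(\<forall>(m::nat) u. m \<noteq> 0 \<longrightarrow> (\<lambda>i. of_nat m * u i) \<in> support_set I \<longrightarrow> u \<in> support_set I)
     \<longleftrightarrow> root_closed I"
proof
  assume H: "\<forall>(m::nat) u. m \<noteq> 0 \<longrightarrow> (\<lambda>i. of_nat m * u i) \<in> support_set I \<longrightarrow> u \<in> support_set I"
  show "root_closed I"
    unfolding root_closed_def
  proof (intro allI impI)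
    fix m :: nat and e
    assume m: "m \<noteq> 0" and "Poly_Mapping.single (Poly_Mapping.map ((*) m) e) 1 \<in> I"
    then have "(\<lambda>i. of_nat m * exponent_poly e i) \<in> support_set I"
      by (simp only: support_set_iff exponent_of_scale exponent_of_exponent_poly)
    with m have "exponent_poly e \<in> support_set I"
      by (rule H[rule_format])
    then show "Poly_Mapping.single e 1 \<in> I"
      by (simp add: support_set_iff exponent_of_exponent_poly)
  qed
next
  assume "root_closed I"
  then show "\<forall>(m::nat) u. m \<noteq> 0 \<longrightarrow> (\<lambda>i. of_nat m * u i) \<in> support_set I \<longrightarrow> u \<in> support_set I"
    unfolding root_closed_def support_set_iff exponent_of_scale by blast
qed

lemma support_set_shift_closed_iff:
  "(\<forall>u v. (\<lambda>i. u i + v i) \<in> support_set I \<longrightarrow> (\<lambda>i. u i + monom 1 1 * v i) \<in> support_set I)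
     \<longleftrightarrow> shift_closed I"
proof
  assume H: "\<forall>u v. (\<lambda>i. u i + v i) \<in> support_set I \<longrightarrow> (\<lambda>i. u i + monom 1 1 * v i) \<in> support_set I"
  show "shift_closed I"
    unfolding shift_closed_def
  proof (intro allI impI)
    fix e f
    assume "Poly_Mapping.single (e + f) 1 \<in> I"
    then have "(\<lambda>i. exponent_poly e i + exponent_poly f i) \<in> support_set I"
      by (simp only: support_set_iff exponent_of_add exponent_of_exponent_poly)
    then have "(\<lambda>i. exponent_poly e i + monom 1 1 * exponent_poly f i) \<in> support_set I"
      by (rule H[rule_format])
    then show "Poly_Mapping.single (e + shift_exp f) 1 \<in> I"
      by (simp only: support_set_iff exponent_of_shift exponent_of_exponent_poly)
  qed
next
  assume "shift_closed I"
  then show "\<forall>u v. (\<lambda>i. u i + v i) \<in> support_set I \<longrightarrow> (\<lambda>i. u i + monom 1 1 * v i) \<in> support_set I"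
    unfolding shift_closed_def support_set_iff exponent_of_shift exponent_of_add by blast
qed

theorem corollary5p10:
  fixes \<sigma> :: "'k::field_char_0 \<Rightarrow> 'k"
    and I :: "('n::finite, 'k) dpoly set"
  assumes "ring_endo \<sigma>"
    and "sigma_ideal \<sigma> I"
    and "monomial_ideal I"
  shows "(radical_ideal I \<and> well_mixed \<sigma> I) \<longleftrightarrow>
          ((\<forall>(m::nat) u. m \<noteq> 0 \<longrightarrow> (\<lambda>i. of_nat m * u i) \<in> support_set I \<longrightarrow> u \<in> support_set I) \<and>
           (\<forall>u v. (\<lambda>i. u i + v i) \<in> support_set I \<longrightarrow>
                  (\<lambda>i. u i + monom 1 1 * v i) \<in> support_set I))"
proof -
  have \<sigma>: "\<sigma> 1 = 1"
    using assms(1) by (simp add: ring_endo_def)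
  have "radical_ideal I \<and> well_mixed \<sigma> I \<longleftrightarrow> root_closed I \<and> shift_closed I"
  proof
    assume "radical_ideal I \<and> well_mixed \<sigma> I"
    then show "root_closed I \<and> shift_closed I"
      using radical_imp_root_closed[of I] well_mixed_imp_shift_closed[of \<sigma> I] \<sigma> by simp
  next
    assume "root_closed I \<and> shift_closed I"
    then show "radical_ideal I \<and> well_mixed \<sigma> I"
      using root_closed_imp_radical[OF assms(3)] shift_closed_imp_well_mixed[OF assms(3), of \<sigma>]
      by simp
  qed
  then show ?thesis
    unfolding support_set_root_closed_iff support_set_shift_closed_iff .
qed

end
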